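(* Let $x \in \{0,1\}^{N}$ and $q \in Q$. Then demand $q$ is served under $x$ (i.e., there exists $r \in R_q$ such that $\sum_{j \in S} x_j \ge 1$ for all $S \in \mathcal{D}_{q,r}$) if and only if $\sum_{j \in S} x_j \ge 1$ for all $S \in \mathcal{C}_q$.
   Context: Let $N$ be a finite set (of nodes) and $Q$ a finite set (of demands). For each $q \in Q$ let $R_q$ be a finite nonempty set (of routes), and for each $r \in R_q$ let $\mathcal{D}_{q,r} \subseteq 2^{N}$ be a family of subsets of $N$. Route $r$ is called traversable under $x \in \{0,1\}^N$ if $\sum_{j\in S} x_j \ge 1$ for every $S \in \mathcal{D}_{q,r}$, and demand $q$ is served under $x$ if some $r \in R_q$ is traversable under $x$. Define the aggregated family $\mathcal{C}_q = \{ \bigcup_{r \in R_q} S_r : S_r \in \mathcal{D}_{q,r} \text{ for each } r \in R_q\}$, i.e. each member of $\mathcal{C}_q$ is the union of one chosen set $S_r\in\mathcal{D}_{q,r}$ for every $r\in R_q$. *)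

theory Defs
  imports Main
begin

definition traversable :: "('n \<Rightarrow> nat) \<Rightarrow> 'n set set \<Rightarrow> bool" where
  "traversable x Dqr \<longleftrightarrow> (\<forall>S\<in>Dqr. (\<Sum>j\<in>S. x j) \<ge> 1)"

definition served :: "('n \<Rightarrow> nat) \<Rightarrow> 'r set \<Rightarrow> ('r \<Rightarrow> 'n set set) \<Rightarrow> bool" where
  "served x Rq Dq \<longleftrightarrow> (\<exists>r\<in>Rq. traversable x (Dq r))"

definition aggregated :: "'r set \<Rightarrow> ('r \<Rightarrow> 'n set set) \<Rightarrow> 'n set set" where
  "aggregated Rq Dq = {(\<Union>r\<in>Rq. Sel r) | Sel. \<forall>r\<in>Rq. Sel r \<in> Dq r}"

end

theory Submission
  imports Defs
begin

text \<open>With nonnegative integer weights, a set has weight at least one exactly when it meets the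
  support of the weights, so both sides become hitting conditions for that support. A set T meets
  every aggregated union iff T meets every set of some single route: if every route had a set missed
  by T, choosing one such set per route gives an aggregated union that is missed too.\<close>

lemma sum_nat_ge_1_iff_meets_support:
  fixes x :: "'a \<Rightarrow> nat"
  assumes "finite S"
  shows "(\<Sum>j\<in>S. x j) \<ge> 1 \<longleftrightarrow> S \<inter> {j. x j \<noteq> 0} \<noteq> {}"
  using sum_eq_0_iff[OF assms, of x] by auto

lemma aggregated_meets_iff:
  "(\<exists>r\<in>R. \<forall>S\<in>D r. S \<inter> T \<noteq> {}) \<longleftrightarrow> (\<forall>S\<in>aggregated R D. S \<inter> T \<noteq> {})"
proof
  assume "\<exists>r\<in>R. \<forall>S\<in>D r. S \<inter> T \<noteq> {}"
  then obtain r where "r \<in> R" and met: "\<forall>S\<in>D r. S \<inter> T \<noteq> {}" by blast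
  show "\<forall>S\<in>aggregated R D. S \<inter> T \<noteq> {}"
  proof
    fix S assume "S \<in> aggregated R D"
    then obtain Sel where S: "S = (\<Union>r\<in>R. Sel r)" and Sel: "\<forall>r\<in>R. Sel r \<in> D r"
      unfolding aggregated_def by blast
    have "Sel r \<inter> T \<noteq> {}" using met Sel \<open>r \<in> R\<close> by blast
    moreover have "Sel r \<subseteq> S" using S \<open>r \<in> R\<close> by blast
    ultimately show "S \<inter> T \<noteq> {}" by blast
  qed
next
  assume all_met: "\<forall>S\<in>aggregated R D. S \<inter> T \<noteq> {}"
  show "\<exists>r\<in>R. \<forall>S\<in>D r. S \<inter> T \<noteq> {}"
  proof (rule ccontr)
    assume "\<not> (\<exists>r\<in>R. \<forall>S\<in>D r. S \<inter> T \<noteq> {})"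
    then obtain Sel where Sel: "\<forall>r\<in>R. Sel r \<in> D r \<and> Sel r \<inter> T = {}" by metis
    then have "(\<Union>r\<in>R. Sel r) \<in> aggregated R D" unfolding aggregated_def by blast
    moreover have "(\<Union>r\<in>R. Sel r) \<inter> T = {}" using Sel by blast
    ultimately show False using all_met by blast
  qed
qed

lemma finite_aggregated_member:
  assumes "finite R" and "\<forall>r\<in>R. \<forall>S\<in>D r. finite S" and "S \<in> aggregated R D"
  shows "finite S"
  using assms unfolding aggregated_def by auto

theorem lemma1:
  fixes N :: "'n set" and Q :: "'q set"
    and R :: "'q \<Rightarrow> 'r set" and D :: "'q \<Rightarrow> 'r \<Rightarrow> 'n set set"
    and x :: "'n \<Rightarrow> nat" and q :: 'q
  assumes "finite N" and "finite Q"
    and "\<And>q. q \<in> Q \<Longrightarrow> finite (R q) \<and> R q \<noteq> {}"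
    and "\<And>q r. q \<in> Q \<Longrightarrow> r \<in> R q \<Longrightarrow> D q r \<subseteq> Pow N"
    and "\<forall>j\<in>N. x j \<in> {0, 1}"
    and "q \<in> Q"
  shows "served x (R q) (D q) \<longleftrightarrow> (\<forall>S\<in>aggregated (R q) (D q). (\<Sum>j\<in>S. x j) \<ge> 1)"
proof -
  let ?T = "{j. x j \<noteq> 0}"
  have finite_D: "finite S" if "r \<in> R q" and "S \<in> D q r" for r S
    using assms(4)[OF assms(6) that(1)] that(2) finite_subset[OF _ assms(1)] by blast
  have finite_aggregated: "finite S" if "S \<in> aggregated (R q) (D q)" for S
    using finite_aggregated_member[OF _ _ that] assms(3)[OF assms(6)] finite_D by blast
  have traversable_iff: "traversable x (D q r) \<longleftrightarrow> (\<forall>S\<in>D q r. S \<inter> ?T \<noteq> {})"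
    if "r \<in> R q" for r
    unfolding traversable_def
    using sum_nat_ge_1_iff_meets_support[OF finite_D[OF that]] by blast
  have "served x (R q) (D q) \<longleftrightarrow> (\<exists>r\<in>R q. \<forall>S\<in>D q r. S \<inter> ?T \<noteq> {})"
    unfolding served_def using traversable_iff by blast
  also have "\<dots> \<longleftrightarrow> (\<forall>S\<in>aggregated (R q) (D q). S \<inter> ?T \<noteq> {})"
    by (rule aggregated_meets_iff)
  also have "\<dots> \<longleftrightarrow> (\<forall>S\<in>aggregated (R q) (D q). (\<Sum>j\<in>S. x j) \<ge> 1)"
    using sum_nat_ge_1_iff_meets_support[OF finite_aggregated] by blast
  finally show ?thesis .
qed

end
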